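(* Let $M$ be a compact connected $1$-manifold (the circle $\mathrm{S}^1$ or a closed interval), and let $G$ be a group acting faithfully by homeomorphisms of $M$, generated by a finite symmetric set $\mathcal{G}$ (i.e. $\mathcal{G}=\mathcal{G}^{-1}$), with $|\mathcal{G}|\ge 2$. Let $\varepsilon > \log(|\mathcal{G}|-1)$. Then there is a homeomorphism $h$ of $M$ such that for every $g \in \mathcal{G}$, the homeomorphism $h g h^{-1}$ is Lipschitz with Lipschitz constant at most $e^{\varepsilon}$ (with respect to the standard metric of $M$, normalized to have total length $1$). In particular, $G$ is topologically conjugate to a group of Lipschitz homeomorphisms of $M$.
   Context: For $f\in G$, the word length $\|f\|$ is the minimal number of factors needed to write $f$ as a product of elements of $\mathcal{G}$ (with $\|id\|=0$). *)

theory Defs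
  imports "HOL-Analysis.Analysis"
begin

text \<open>The two compact connected 1-manifolds, both realised as subsets of the complex plane,
each with its standard metric normalised to total length 1.\<close>

definition circle_dist :: "complex \<Rightarrow> complex \<Rightarrow> real" where
  "circle_dist z w = \<bar>Arg (z / w)\<bar> / (2 * pi)"

definition unit_interval_c :: "complex set" where
  "unit_interval_c = complex_of_real ` {0..1}"

definition one_manifold_model :: "complex set \<Rightarrow> (complex \<Rightarrow> complex \<Rightarrow> real) \<Rightarrow> bool" where
  "one_manifold_model M d \<longleftrightarrow>
     (M = sphere 0 1 \<and> d = circle_dist) \<or>
     (M = unit_interval_c \<and> d = (\<lambda>z w. dist z w))"

text \<open>Homeomorphisms of M, viewed as maps that are the identity outside M
(so that equality of such maps is equality as self-maps of M).\<close>
definition homeo_of :: "complex set \<Rightarrow> (complex \<Rightarrow> complex) \<Rightarrow> bool" where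
  "homeo_of M f \<longleftrightarrow> (\<exists>g. homeomorphism M M f g) \<and> (\<forall>x. x \<notin> M \<longrightarrow> f x = x)"

definition lipschitz_wrt :: "complex set \<Rightarrow> (complex \<Rightarrow> complex \<Rightarrow> real) \<Rightarrow> real \<Rightarrow> (complex \<Rightarrow> complex) \<Rightarrow> bool" where
  "lipschitz_wrt M d L f \<longleftrightarrow> (\<forall>x\<in>M. \<forall>y\<in>M. d (f x) (f y) \<le> L * d x y)"

end

theory Submission
  imports Defs "HOL-Probability.Distribution_Functions"
begin

text \<open>Let \<open>\<lambda>\<close> be Lebesgue measure on \<open>[0, 1]\<close>, carried to \<open>M\<close> by a parametrization, and let
  \<open>\<mu> = \<Sum>\<^sub>u exp (- \<epsilon> |u|) \<cdot> u\<^sub>*\<lambda>\<close>, summed over the reduced words \<open>u\<close> in the generators.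
  There are at most \<open>k (k - 1)^n\<close> reduced words of length \<open>n\<close>, where \<open>k = card Gens\<close>, so the
  sum converges because \<open>\<epsilon> > ln (k - 1)\<close>. Left multiplication by a generator \<open>g\<close> is injective on
  reduced words and changes their length by at most one, hence \<open>\<mu> (g S) \<le> exp \<epsilon> \<cdot> \<mu> S\<close>.
  Since \<open>\<mu>\<close> has no atoms and dominates \<open>\<lambda>\<close>, its normalized distribution function is a new
  coordinate on \<open>M\<close>, in which the length of an arc is proportional to its \<open>\<mu>\<close>-measure; in this
  coordinate every generator is \<open>exp \<epsilon>\<close>-Lipschitz.\<close>

section \<open>Counting reduced words\<close>

fun reduced_word :: "('a \<Rightarrow> 'a) \<Rightarrow> 'a list \<Rightarrow> bool" where
  "reduced_word iv (x # y # u) \<longleftrightarrow> y \<noteq> iv x \<and> reduced_word iv (y # u)"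
| "reduced_word iv _ \<longleftrightarrow> True"

lemma reduced_word_tl: "reduced_word iv (a # u) \<Longrightarrow> reduced_word iv u"
  by (cases u) auto

definition reduced_words :: "'a set \<Rightarrow> ('a \<Rightarrow> 'a) \<Rightarrow> 'a list set" where
  "reduced_words G iv = {u. set u \<subseteq> G \<and> reduced_word iv u}"

definition reduced_words_len :: "'a set \<Rightarrow> ('a \<Rightarrow> 'a) \<Rightarrow> nat \<Rightarrow> 'a list set" where
  "reduced_words_len G iv n = {u \<in> reduced_words G iv. length u = n}"

lemma finite_reduced_words_len: "finite G \<Longrightarrow> finite (reduced_words_len G iv n)"
  unfolding reduced_words_len_def reduced_words_def
  by (rule finite_subset[OF _ finite_lists_length_eq[of G n]]) auto

lemma reduced_words_len_Suc_Suc_subset: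
  assumes "\<And>x. x \<in> G \<Longrightarrow> iv (iv x) = x"
  shows "reduced_words_len G iv (Suc (Suc n)) \<subseteq>
           (\<Union>u\<in>reduced_words_len G iv (Suc n). (\<lambda>x. x # u) ` (G - {iv (hd u)}))"
proof
  fix v assume v: "v \<in> reduced_words_len G iv (Suc (Suc n))"
  then obtain x y u where v_eq: "v = x # y # u"
    unfolding reduced_words_len_def by (auto simp: length_Suc_conv)
  have "y # u \<in> reduced_words_len G iv (Suc n)" and "x \<in> G - {iv y}"
    using v assms unfolding v_eq reduced_words_len_def reduced_words_def by auto
  then show "v \<in> (\<Union>u\<in>reduced_words_len G iv (Suc n). (\<lambda>x. x # u) ` (G - {iv (hd u)}))"
    using v_eq by force
qed

lemma card_reduced_words_len_Suc:
  assumes G: "finite G" "card G \<ge> 1" and iv: "\<And>x. x \<in> G \<Longrightarrow> iv x \<in> G" "\<And>x. x \<in> G \<Longrightarrow> iv (iv x) = x"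
  shows "card (reduced_words_len G iv (Suc n)) \<le> card G * (card G - 1) ^ n"
proof (induction n)
  case 0
  have "reduced_words_len G iv 1 \<subseteq> (\<lambda>x. [x]) ` G"
    unfolding reduced_words_len_def reduced_words_def by (auto simp: length_Suc_conv)
  then have "card (reduced_words_len G iv 1) \<le> card ((\<lambda>x. [x]) ` G)"
    using G by (intro card_mono) auto
  also have "\<dots> \<le> card G"
    using G by (intro card_image_le)
  finally show ?case
    by simp
next
  case (Suc n)
  let ?R = "reduced_words_len G iv (Suc n)"
  have "card (reduced_words_len G iv (Suc (Suc n))) \<le> card (\<Union>u\<in>?R. (\<lambda>x. x # u) ` (G - {iv (hd u)}))"
    by (intro card_mono reduced_words_len_Suc_Suc_subset iv)
       (auto intro!: finite_UN_I finite_reduced_words_len G)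
  also have "\<dots> \<le> (\<Sum>u\<in>?R. card ((\<lambda>x. x # u) ` (G - {iv (hd u)})))"
    by (rule card_UN_le) (rule finite_reduced_words_len[OF G(1)])
  also have "\<dots> \<le> (\<Sum>u\<in>?R. card G - 1)"
  proof (rule sum_mono)
    fix u assume "u \<in> ?R"
    then have "iv (hd u) \<in> G"
      using iv unfolding reduced_words_len_def reduced_words_def by (cases u) auto
    then show "card ((\<lambda>x. x # u) ` (G - {iv (hd u)})) \<le> card G - 1"
      using card_image_le[of "G - {iv (hd u)}" "\<lambda>x. x # u"] G by simp
  qed
  also have "\<dots> \<le> card G * (card G - 1) ^ n * (card G - 1)"
    using Suc.IH by simp
  finally show ?case
    by (simp add: ac_simps)
qed

lemma card_reduced_words_len_le:
  assumes "finite G" "card G \<ge> 2" "\<And>x. x \<in> G \<Longrightarrow> iv x \<in> G" "\<And>x. x \<in> G \<Longrightarrow> iv (iv x) = x"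
  shows "card (reduced_words_len G iv n) \<le> card G * (card G - 1) ^ n"
proof (cases n)
  case 0
  have "reduced_words_len G iv 0 = {[]}"
    unfolding reduced_words_len_def reduced_words_def by auto
  then show ?thesis
    using 0 assms(2) by simp
next
  case (Suc m)
  have "card (reduced_words_len G iv n) \<le> card G * (card G - 1) ^ m"
    using card_reduced_words_len_Suc[of G iv m] assms Suc by simp
  also have "\<dots> \<le> card G * (card G - 1) ^ n"
    using Suc assms(2) by simp
  finally show ?thesis .
qed

lemma summable_on_exp_length_reduced_words:
  assumes G: "finite G" "card G \<ge> 2" and iv: "\<And>x. x \<in> G \<Longrightarrow> iv x \<in> G" "\<And>x. x \<in> G \<Longrightarrow> iv (iv x) = x"
    and eps: "\<epsilon> > ln (real (card G) - 1)"
  shows "(\<lambda>u. exp (- \<epsilon> * real (length u))) summable_on reduced_words G iv"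
proof (rule nonneg_bdd_above_summable_on)
  define k where "k = real (card G)"
  define r where "r = (k - 1) * exp (- \<epsilon>)"
  have k1: "k - 1 \<ge> 1"
    using G unfolding k_def by simp
  then have "k - 1 < exp \<epsilon>"
    using eps exp_less_mono[of "ln (k - 1)" \<epsilon>] unfolding k_def by simp
  then have r: "0 < r" "r < 1"
    using k1 unfolding r_def by (auto simp: exp_minus field_simps)
  show "bdd_above (sum (\<lambda>u. exp (- \<epsilon> * real (length u))) ` {F. F \<subseteq> reduced_words G iv \<and> finite F})"
  proof (rule bdd_aboveI2)
    fix X assume X: "X \<in> {F. F \<subseteq> reduced_words G iv \<and> finite F}"
    define N where "N = Suc (Max (insert 0 (length ` X)))"
    have X_sub: "X \<subseteq> (\<Union>n<N. reduced_words_len G iv n)"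
      using X unfolding N_def reduced_words_len_def by (auto simp: le_imp_less_Suc)
    have "(\<Sum>u\<in>X. exp (- \<epsilon> * real (length u)))
        \<le> (\<Sum>u\<in>(\<Union>n<N. reduced_words_len G iv n). exp (- \<epsilon> * real (length u)))"
      by (rule sum_mono2[OF _ X_sub]) (auto intro!: finite_reduced_words_len G)
    also have "\<dots> = (\<Sum>n<N. \<Sum>u\<in>reduced_words_len G iv n. exp (- \<epsilon> * real (length u)))"
      by (rule sum.UNION_disjoint)
         (use finite_reduced_words_len[OF G(1)] in \<open>auto simp: reduced_words_len_def\<close>)
    also have "\<dots> = (\<Sum>n<N. real (card (reduced_words_len G iv n)) * exp (- \<epsilon> * real n))"
      by (rule sum.cong) (auto simp: reduced_words_len_def)
    also have "\<dots> \<le> (\<Sum>n<N. k * (k - 1) ^ n * exp (- \<epsilon> * real n))"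
    proof (rule sum_mono)
      fix n
      have "real (card (reduced_words_len G iv n)) \<le> real (card G * (card G - 1) ^ n)"
        using card_reduced_words_len_le[OF G iv, of n] by (simp only: of_nat_le_iff)
      also have "\<dots> = k * (k - 1) ^ n"
        unfolding k_def using G by (simp add: of_nat_diff)
      finally have "real (card (reduced_words_len G iv n)) \<le> k * (k - 1) ^ n" .
      then show "real (card (reduced_words_len G iv n)) * exp (- \<epsilon> * real n)
                 \<le> k * (k - 1) ^ n * exp (- \<epsilon> * real n)"
        by (simp add: mult_right_mono)
    qed
    also have "\<dots> = k * (\<Sum>n<N. r ^ n)"
      unfolding r_def sum_distrib_left
      by (rule sum.cong) (auto simp: power_mult_distrib exp_of_nat_mult[symmetric] mult.commute)
    also have "\<dots> = k * ((1 - r ^ N) / (1 - r))"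
      using r by (simp add: sum_gp_strict)
    also have "\<dots> \<le> k * (1 / (1 - r))"
      using r k1 by (intro mult_left_mono divide_right_mono) auto
    finally show "(\<Sum>u\<in>X. exp (- \<epsilon> * real (length u))) \<le> k * (1 / (1 - r))" .
  qed
qed simp

section \<open>Unconditional sums and continuity\<close>

lemma continuous_on_infsum_weighted:
  fixes w :: "'a \<Rightarrow> real" and c :: "'a \<Rightarrow> 'b::topological_space \<Rightarrow> real"
  assumes w: "w summable_on A" "\<And>u. u \<in> A \<Longrightarrow> w u \<ge> 0"
    and c: "\<And>u. u \<in> A \<Longrightarrow> continuous_on S (c u)" "\<And>u t. u \<in> A \<Longrightarrow> 0 \<le> c u t \<and> c u t \<le> 1"
  shows "continuous_on S (\<lambda>t. \<Sum>\<^sub>\<infinity> u\<in>A. w u * c u t)"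
proof (rule uniform_limit_theorem[where F = "finite_subsets_at_top A" and f = "\<lambda>X t. \<Sum>u\<in>X. w u * c u t"])
  show "\<forall>\<^sub>F X in finite_subsets_at_top A. continuous_on S (\<lambda>t. \<Sum>u\<in>X. w u * c u t)"
    by (rule eventually_finite_subsets_at_top_weakI) (auto intro!: continuous_intros c)
  show "finite_subsets_at_top A \<noteq> bot"
    by (rule finite_subsets_at_top_neq_bot)
  have summable: "(\<lambda>u. w u * c u t) summable_on B" if "B \<subseteq> A" for t B
  proof -
    have "(\<lambda>u. w u * c u t) summable_on A"
      by (rule summable_on_comparison_test[OF w(1)]) (use w c in \<open>auto intro: mult_left_le\<close>)
    then show ?thesis
      using that summable_on_subset_banach by blast
  qed
  have tail: "0 \<le> (\<Sum>\<^sub>\<infinity> u\<in>A. w u * c u t) - (\<Sum>u\<in>X. w u * c u t)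
            \<and> (\<Sum>\<^sub>\<infinity> u\<in>A. w u * c u t) - (\<Sum>u\<in>X. w u * c u t) \<le> infsum w A - sum w X"
    if X: "finite X" "X \<subseteq> A" for X t
  proof -
    have "(\<Sum>\<^sub>\<infinity> u\<in>A. w u * c u t) - (\<Sum>u\<in>X. w u * c u t) = (\<Sum>\<^sub>\<infinity> u\<in>A - X. w u * c u t)"
      using infsum_Diff[OF summable[OF order_refl] summable[OF X(2)] X(2)] X by simp
    moreover have "(\<Sum>\<^sub>\<infinity> u\<in>A - X. w u * c u t) \<le> infsum w (A - X)"
      by (rule infsum_mono[OF summable summable_on_subset_banach[OF w(1)]])
         (use c w in \<open>auto intro: mult_left_le\<close>)
    moreover have "infsum w (A - X) = infsum w A - sum w X"
      using infsum_Diff[OF w(1) summable_on_subset_banach[OF w(1) X(2)] X(2)] X by simp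
    moreover have "0 \<le> (\<Sum>\<^sub>\<infinity> u\<in>A - X. w u * c u t)"
      by (rule infsum_nonneg) (use c w in auto)
    ultimately show ?thesis
      by linarith
  qed
  show "uniform_limit S (\<lambda>X t. \<Sum>u\<in>X. w u * c u t) (\<lambda>t. \<Sum>\<^sub>\<infinity> u\<in>A. w u * c u t) (finite_subsets_at_top A)"
    unfolding uniform_limit_iff
  proof (intro allI impI)
    fix e :: real assume "e > 0"
    have "\<forall>\<^sub>F X in finite_subsets_at_top A. dist (sum w X) (infsum w A) < e"
      using infsum_tendsto[OF w(1)] \<open>e > 0\<close> by (rule tendstoD)
    moreover have "\<forall>\<^sub>F X in finite_subsets_at_top A. finite X \<and> X \<subseteq> A"
      by (rule eventually_finite_subsets_at_top_weakI) auto
    ultimately show "\<forall>\<^sub>F X in finite_subsets_at_top A.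
        \<forall>t\<in>S. dist (\<Sum>u\<in>X. w u * c u t) (\<Sum>\<^sub>\<infinity> u\<in>A. w u * c u t) < e"
    proof eventually_elim
      case (elim X)
      show ?case
      proof
        fix t assume "t \<in> S"
        show "dist (\<Sum>u\<in>X. w u * c u t) (\<Sum>\<^sub>\<infinity> u\<in>A. w u * c u t) < e"
          using tail[of X t] elim by (simp add: dist_real_def abs_less_iff)
      qed
    qed
  qed
qed

lemma infsum_comp_inj_le:
  fixes f :: "'a \<Rightarrow> real"
  assumes f: "f summable_on A" "\<And>x. x \<in> A \<Longrightarrow> 0 \<le> f x"
    and \<sigma>: "inj_on \<sigma> A" "\<sigma> ` A \<subseteq> A"
  shows "(f \<circ> \<sigma>) summable_on A" "infsum (f \<circ> \<sigma>) A \<le> infsum f A"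
proof -
  have f_image: "f summable_on \<sigma> ` A"
    using f(1) \<sigma>(2) summable_on_subset_banach by blast
  then show "(f \<circ> \<sigma>) summable_on A"
    using summable_on_reindex[OF \<sigma>(1)] by blast
  have "infsum (f \<circ> \<sigma>) A = infsum f (\<sigma> ` A)"
    by (rule infsum_reindex[OF \<sigma>(1), symmetric])
  also have "\<dots> \<le> infsum f A"
    using f \<sigma>(2) by (intro infsum_mono2[OF f_image]) auto
  finally show "infsum (f \<circ> \<sigma>) A \<le> infsum f A" .
qed

lemma continuous_on_through_compact_surjection:
  fixes q :: "'a::metric_space \<Rightarrow> 'b::metric_space" and f :: "'b \<Rightarrow> 'c::metric_space"
  assumes "compact S" "continuous_on S q" "q ` S = T" "continuous_on S (f \<circ> q)"
  shows "continuous_on T f"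
  unfolding continuous_on_closed_invariant
proof (intro allI impI exI conjI)
  fix B :: "'c set" assume "closed B"
  have "compact (S \<inter> (f \<circ> q) -` B)"
    using closedin_compact[OF assms(1) continuous_closedin_preimage[OF assms(4) \<open>closed B\<close>]] .
  then have "compact (q ` (S \<inter> (f \<circ> q) -` B))"
    using assms(2) by (metis compact_continuous_image continuous_on_subset inf_le1)
  moreover have "q ` (S \<inter> (f \<circ> q) -` B) = T \<inter> f -` B"
    using assms(3) by auto
  ultimately show "closed (T \<inter> f -` B)"
    by (simp add: compact_imp_closed)
  show "T \<inter> f -` B \<inter> T = f -` B \<inter> T"
    by blast
qed

section \<open>Words acting on a one-manifold\<close>

definition eval_word :: "('a \<Rightarrow> 'a) list \<Rightarrow> 'a \<Rightarrow> 'a" where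
  "eval_word u = foldr (\<circ>) u id"

lemma eval_word_simps [simp]: "eval_word [] = id" "eval_word (a # u) = a \<circ> eval_word u"
  by (simp_all add: eval_word_def)

locale generated_action =
  fixes M :: "complex set" and Gens :: "(complex \<Rightarrow> complex) set" and \<epsilon> :: real
  assumes finite_Gens: "finite Gens" and card_Gens: "card Gens \<ge> 2"
    and homeo_Gens: "\<And>g. g \<in> Gens \<Longrightarrow> homeo_of M g"
    and inverse_in_Gens: "\<And>g. g \<in> Gens \<Longrightarrow> \<exists>g'\<in>Gens. homeomorphism M M g g'"
    and eps_gt: "\<epsilon> > ln (real (card Gens) - 1)"
begin

definition inv_gen :: "(complex \<Rightarrow> complex) \<Rightarrow> (complex \<Rightarrow> complex)" where
  "inv_gen g = (SOME g'. g' \<in> Gens \<and> homeomorphism M M g g')"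

lemma inv_gen:
  assumes "g \<in> Gens"
  shows "inv_gen g \<in> Gens" "homeomorphism M M g (inv_gen g)"
  using someI_ex[OF inverse_in_Gens[OF assms, unfolded Bex_def]] unfolding inv_gen_def by auto

lemma gen_outside: "g \<in> Gens \<Longrightarrow> x \<notin> M \<Longrightarrow> g x = x"
  using homeo_Gens unfolding homeo_of_def by blast

lemma gen_image: "g \<in> Gens \<Longrightarrow> g ` M \<subseteq> M"
  using inv_gen(2) unfolding homeomorphism_def by blast

lemma continuous_on_gen: "g \<in> Gens \<Longrightarrow> continuous_on M g"
  using inv_gen(2) unfolding homeomorphism_def by blast

lemma inv_gen_left: "g \<in> Gens \<Longrightarrow> inv_gen g (g x) = x"
  using inv_gen[of g] gen_outside[of g x] gen_outside[of "inv_gen g" x]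
  by (cases "x \<in> M") (auto simp: homeomorphism_def)

lemma inv_gen_right: "g \<in> Gens \<Longrightarrow> g (inv_gen g x) = x"
  using inv_gen[of g] gen_outside[of g x] gen_outside[of "inv_gen g" x]
  by (cases "x \<in> M") (auto simp: homeomorphism_def)

lemma inv_gen_inv_gen: "g \<in> Gens \<Longrightarrow> inv_gen (inv_gen g) = g"
  by (metis ext inv_gen(1) inv_gen_left inv_gen_right)

lemma eval_word_image: "set u \<subseteq> Gens \<Longrightarrow> eval_word u ` M \<subseteq> M"
  by (induction u) (auto simp: image_comp[symmetric] dest!: gen_image)

lemma continuous_on_eval_word: "set u \<subseteq> Gens \<Longrightarrow> continuous_on M (eval_word u)"
proof (induction u)
  case (Cons a u)
  then show ?case
    using continuous_on_compose[of M "eval_word u" a] continuous_on_subset[OF continuous_on_gen]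
      eval_word_image[of u] by auto
qed (simp add: continuous_on_id)

lemma inj_eval_word: "set u \<subseteq> Gens \<Longrightarrow> inj (eval_word u)"
proof (induction u)
  case (Cons a u)
  have "inj a"
    using Cons.prems inv_gen_left by (intro inj_on_inverseI[where g = "inv_gen a"]) auto
  then show ?case
    using Cons inj_compose[of a "eval_word u"] by (simp add: comp_def)
qed simp

abbreviation Red :: "(complex \<Rightarrow> complex) list set" where
  "Red \<equiv> reduced_words Gens inv_gen"

lemma Red_subset: "u \<in> Red \<Longrightarrow> set u \<subseteq> Gens"
  unfolding reduced_words_def by auto

lemma Nil_in_Red: "[] \<in> Red"
  unfolding reduced_words_def by simp

definition reduced_cons :: "(complex \<Rightarrow> complex) \<Rightarrow> (complex \<Rightarrow> complex) list \<Rightarrow> (complex \<Rightarrow> complex) list" where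
  "reduced_cons a u = (case u of [] \<Rightarrow> [a] | b # v \<Rightarrow> if b = inv_gen a then v else a # u)"

lemma reduced_cons_in_Red: "a \<in> Gens \<Longrightarrow> u \<in> Red \<Longrightarrow> reduced_cons a u \<in> Red"
  unfolding reduced_cons_def reduced_words_def by (cases u) (auto dest: reduced_word_tl)

lemma eval_word_reduced_cons: "a \<in> Gens \<Longrightarrow> eval_word (reduced_cons a u) = a \<circ> eval_word u"
  unfolding reduced_cons_def by (cases u) (auto simp: inv_gen_right)

lemma length_reduced_cons: "length (reduced_cons a u) \<le> Suc (length u)"
  unfolding reduced_cons_def by (cases u) auto

lemma inj_on_reduced_cons: "a \<in> Gens \<Longrightarrow> inj_on (reduced_cons a) Red"
proof
  fix u v assume a: "a \<in> Gens" and u: "u \<in> Red" and v: "v \<in> Red"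
    and eq: "reduced_cons a u = reduced_cons a v"
  have not_Red: False if "x \<in> Red" "x = inv_gen a # a # y" for x y
    using that inv_gen_inv_gen[OF a] unfolding reduced_words_def by auto
  show "u = v"
    using eq not_Red[OF u] not_Red[OF v] unfolding reduced_cons_def
    by (cases u; cases v) (auto split: if_splits)
qed

definition weight :: "(complex \<Rightarrow> complex) list \<Rightarrow> real" where
  "weight u = exp (- \<epsilon> * real (length u))"

lemma weight_pos: "weight u > 0"
  unfolding weight_def by simp

lemma weight_summable: "weight summable_on Red"
  unfolding weight_def
  by (rule summable_on_exp_length_reduced_words[OF finite_Gens card_Gens inv_gen(1) inv_gen_inv_gen eps_gt])

lemma eps_pos: "\<epsilon> > 0"
proof -
  have "ln (real (card Gens) - 1) \<ge> 0"
    using card_Gens by simp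
  then show ?thesis
    using eps_gt by linarith
qed

lemma weight_le_reduced_cons: "weight u \<le> exp \<epsilon> * weight (reduced_cons a u)"
proof -
  have "\<epsilon> * real (length (reduced_cons a u)) \<le> \<epsilon> * (real (length u) + 1)"
    using length_reduced_cons[of a u] eps_pos by (intro mult_left_mono) auto
  then show ?thesis
    unfolding weight_def by (simp add: algebra_simps flip: exp_add)
qed

end

section \<open>The measure \<open>\<mu>\<close>\<close>

text \<open>\<open>p\<close> parametrizes \<open>M\<close> by \<open>[0, 1]\<close>, injectively on \<open>D\<close>; its inverse \<open>\<theta>\<close> is only required to be
  Borel, since on the circle it jumps at \<open>p 0\<close>.\<close>

locale parametrized_action = generated_action +
  fixes D :: "real set" and p :: "real \<Rightarrow> complex" and \<theta> :: "complex \<Rightarrow> real"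
  assumes D_cases: "D = {0..1} \<or> (D = {0..<1} \<and> p 1 = p 0)"
    and p_image_D: "p ` D = M" and p_image: "p ` {0..1} = M"
    and continuous_p: "continuous_on {0..1} p"
    and \<theta>_p: "\<And>t. t \<in> D \<Longrightarrow> \<theta> (p t) = t"
    and \<theta>_in_D: "\<And>z. z \<in> M \<Longrightarrow> \<theta> z \<in> D"
    and p_\<theta>: "\<And>z. z \<in> M \<Longrightarrow> p (\<theta> z) = z"
    and \<theta>_measurable: "\<theta> \<in> borel_measurable borel"
begin

lemma D_bounds: "D \<subseteq> {0..1}" "{0..1} \<subseteq> insert 1 D" "{0..<1} \<subseteq> D"
  using D_cases by auto

lemma D_borel: "D \<in> sets borel"
  using D_cases by auto

lemma p_in_M: "t \<in> {0..1} \<Longrightarrow> p t \<in> M"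
  using p_image by blast

lemma compact_M: "compact M"
  using compact_continuous_image[OF continuous_p compact_Icc[of 0 1]] p_image by simp

definition lebesgue_01 :: "real measure" where
  "lebesgue_01 = restrict_space lborel {0..1}"

lemma space_lebesgue_01: "space lebesgue_01 = {0..1}"
  unfolding lebesgue_01_def by (simp add: space_restrict_space)

lemma prob_space_lebesgue_01: "prob_space lebesgue_01"
  unfolding lebesgue_01_def by (rule prob_space_restrict_space) auto

lemma measure_lebesgue_01: "S \<subseteq> {0..1} \<Longrightarrow> measure lebesgue_01 S = measure lborel S"
  unfolding lebesgue_01_def by (rule measure_restrict_space) auto

definition word_coord :: "(complex \<Rightarrow> complex) list \<Rightarrow> real \<Rightarrow> real" where
  "word_coord u s = \<theta> (eval_word u (p s))"

definition word_measure :: "(complex \<Rightarrow> complex) list \<Rightarrow> real measure" where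
  "word_measure u = distr lebesgue_01 borel (word_coord u)"

lemma word_coord_in_D: "set u \<subseteq> Gens \<Longrightarrow> s \<in> {0..1} \<Longrightarrow> word_coord u s \<in> D"
  unfolding word_coord_def using eval_word_image p_in_M \<theta>_in_D by blast

lemma p_word_coord: "set u \<subseteq> Gens \<Longrightarrow> s \<in> {0..1} \<Longrightarrow> p (word_coord u s) = eval_word u (p s)"
  unfolding word_coord_def using eval_word_image p_in_M p_\<theta> by blast

lemma word_coord_measurable: "set u \<subseteq> Gens \<Longrightarrow> word_coord u \<in> borel_measurable lebesgue_01"
proof -
  assume u: "set u \<subseteq> Gens"
  have "continuous_on {0..1} (eval_word u \<circ> p)"
    using continuous_on_compose[OF continuous_p] continuous_on_eval_word[OF u] p_image by simp
  then have "eval_word u \<circ> p \<in> borel_measurable (restrict_space borel {0..1})"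
    by (rule borel_measurable_continuous_on_restrict)
  then have "eval_word u \<circ> p \<in> lebesgue_01 \<rightarrow>\<^sub>M borel"
    unfolding lebesgue_01_def
    using measurable_cong_sets[OF sets_restrict_space_cong[OF sets_lborel] refl] by blast
  from measurable_comp[OF this \<theta>_measurable] show ?thesis
    unfolding word_coord_def by (simp add: comp_def)
qed

lemma inj_on_word_coord: "set u \<subseteq> Gens \<Longrightarrow> inj_on (word_coord u) D"
proof
  fix s t assume u: "set u \<subseteq> Gens" and st: "s \<in> D" "t \<in> D" and eq: "word_coord u s = word_coord u t"
  then have "eval_word u (p s) = eval_word u (p t)"
    using p_word_coord[OF u] D_bounds by (metis subsetD)
  then have "p s = p t"
    using inj_eval_word[OF u] by (simp add: inj_def)
  then show "s = t"
    using \<theta>_p st by metis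
qed

lemma prob_space_word_measure: "set u \<subseteq> Gens \<Longrightarrow> prob_space (word_measure u)"
  unfolding word_measure_def
  by (rule prob_space.prob_space_distr[OF prob_space_lebesgue_01 word_coord_measurable])

lemma sets_word_measure [measurable_cong]: "sets (word_measure u) = sets borel"
  by (simp add: word_measure_def)

lemma measure_word_measure:
  "set u \<subseteq> Gens \<Longrightarrow> S \<in> sets borel \<Longrightarrow>
     measure (word_measure u) S = measure lebesgue_01 (word_coord u -` S \<inter> {0..1})"
  unfolding word_measure_def using measure_distr[OF word_coord_measurable] space_lebesgue_01 by simp

lemma measure_word_measure_le_1: "set u \<subseteq> Gens \<Longrightarrow> measure (word_measure u) S \<le> 1"
  using prob_space.prob_le_1[OF prob_space_word_measure] by auto

lemma word_measure_singleton: "set u \<subseteq> Gens \<Longrightarrow> measure (word_measure u) {x} = 0"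
proof -
  assume u: "set u \<subseteq> Gens"
  have "finite (word_coord u -` {x} \<inter> D)"
    by (rule finite_vimage_IntI[OF _ inj_on_word_coord[OF u]]) simp
  moreover have "word_coord u -` {x} \<inter> {0..1} \<subseteq> insert 1 (word_coord u -` {x} \<inter> D)"
    using D_bounds by auto
  ultimately have "countable (word_coord u -` {x} \<inter> {0..1})"
    by (meson countable_finite finite_insert finite_subset)
  then have "emeasure lborel (word_coord u -` {x} \<inter> {0..1}) = 0"
    by (rule emeasure_lborel_countable)
  then show ?thesis
    using measure_word_measure[OF u] measure_lebesgue_01 by (simp add: measure_def)
qed

end

context parametrized_action
begin

definition \<mu> :: "real set \<Rightarrow> real" where
  "\<mu> S = (\<Sum>\<^sub>\<infinity> u\<in>Red. weight u * measure (word_measure u) S)"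

definition total_mass :: real where
  "total_mass = infsum weight Red"

lemma mu_term_nonneg: "0 \<le> weight u * measure (word_measure u) S"
  using weight_pos[of u] by simp

lemma mu_term_summable: "(\<lambda>u. weight u * measure (word_measure u) S) summable_on Red"
  using measure_word_measure_le_1[OF Red_subset] weight_pos mu_term_nonneg
  by (intro summable_on_comparison_test[OF weight_summable]) (auto intro: mult_left_le less_imp_le)

lemma mu_nonneg: "\<mu> S \<ge> 0"
  unfolding \<mu>_def by (rule infsum_nonneg) (rule mu_term_nonneg)

lemma mu_mono: "S \<subseteq> T \<Longrightarrow> T \<in> sets borel \<Longrightarrow> \<mu> S \<le> \<mu> T"
  unfolding \<mu>_def
proof (rule infsum_mono[OF mu_term_summable mu_term_summable])
  fix u assume u: "u \<in> Red" and ST: "S \<subseteq> T" "T \<in> sets borel"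
  have "measure (word_measure u) S \<le> measure (word_measure u) T"
    using ST prob_space.finite_measure[OF prob_space_word_measure[OF Red_subset[OF u]]]
    by (intro finite_measure.finite_measure_mono) auto
  then show "weight u * measure (word_measure u) S \<le> weight u * measure (word_measure u) T"
    using weight_pos[of u] by simp
qed

lemma mu_Un_disjoint:
  assumes "S \<in> sets borel" "T \<in> sets borel" "S \<inter> T = {}"
  shows "\<mu> (S \<union> T) = \<mu> S + \<mu> T"
proof -
  have "\<mu> (S \<union> T) = (\<Sum>\<^sub>\<infinity> u\<in>Red. weight u * measure (word_measure u) S + weight u * measure (word_measure u) T)"
    unfolding \<mu>_def
  proof (rule infsum_cong)
    fix u assume "u \<in> Red"
    then have "measure (word_measure u) (S \<union> T) = measure (word_measure u) S + measure (word_measure u) T"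
      using assms prob_space.finite_measure[OF prob_space_word_measure[OF Red_subset]]
      by (intro finite_measure.finite_measure_Union) auto
    then show "weight u * measure (word_measure u) (S \<union> T)
             = weight u * measure (word_measure u) S + weight u * measure (word_measure u) T"
      by (simp add: distrib_left)
  qed
  also have "\<dots> = \<mu> S + \<mu> T"
    unfolding \<mu>_def by (rule infsum_add[OF mu_term_summable mu_term_summable])
  finally show ?thesis .
qed

lemma mu_singleton: "\<mu> {x} = 0"
  unfolding \<mu>_def by (rule infsum_0) (simp add: word_measure_singleton Red_subset)

lemma mu_UNIV: "\<mu> UNIV = total_mass"
  unfolding \<mu>_def total_mass_def
proof (rule infsum_cong)
  fix u assume "u \<in> Red"
  then have "measure (word_measure u) (space (word_measure u)) = 1"
    using prob_space.prob_space[OF prob_space_word_measure[OF Red_subset]] by blast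
  then show "weight u * measure (word_measure u) UNIV = weight u"
    by (simp add: word_measure_def)
qed

lemma mu_outside_D: "S \<in> sets borel \<Longrightarrow> S \<inter> D = {} \<Longrightarrow> \<mu> S = 0"
proof -
  assume S: "S \<in> sets borel" "S \<inter> D = {}"
  have "\<mu> S \<le> \<mu> (- D)"
    using S D_borel by (intro mu_mono) auto
  also have "\<mu> (- D) = 0"
    unfolding \<mu>_def
  proof (rule infsum_0)
    fix u assume "u \<in> Red"
    then have "word_coord u -` (- D) \<inter> {0..1} = {}"
      using word_coord_in_D[OF Red_subset] by auto
    then show "weight u * measure (word_measure u) (- D) = 0"
      using measure_word_measure[OF Red_subset[OF \<open>u \<in> Red\<close>], of "- D"] D_borel by simp
  qed
  finally show ?thesis
    using mu_nonneg[of S] by simp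
qed

text \<open>The term of the empty word is already Lebesgue measure.\<close>

lemma length_le_mu_Ioo:
  assumes ab: "0 \<le> a" "a \<le> b" "b \<le> 1"
  shows "b - a \<le> \<mu> {a<..<b}"
proof -
  let ?I = "{a<..<b}"
  have "?I \<subseteq> word_coord [] -` ?I \<inter> space lebesgue_01"
  proof
    fix s assume s: "s \<in> ?I"
    then have "s \<in> D"
      using D_bounds(3) ab by auto
    then have "word_coord [] s = s"
      using \<theta>_p unfolding word_coord_def by simp
    then show "s \<in> word_coord [] -` ?I \<inter> space lebesgue_01"
      using s ab space_lebesgue_01 by auto
  qed
  then have "measure lebesgue_01 ?I \<le> measure lebesgue_01 (word_coord [] -` ?I \<inter> space lebesgue_01)"
    using word_coord_measurable[of "[]"] prob_space.finite_measure[OF prob_space_lebesgue_01]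
    by (intro finite_measure.finite_measure_mono) auto
  moreover have "measure lebesgue_01 ?I = b - a"
    using ab by (subst measure_lebesgue_01) auto
  moreover have "measure lebesgue_01 (word_coord [] -` ?I \<inter> space lebesgue_01) = weight [] * measure (word_measure []) ?I"
    using measure_word_measure[of "[]" ?I] space_lebesgue_01 by (simp add: weight_def)
  moreover have "weight [] * measure (word_measure []) ?I \<le> \<mu> ?I"
    unfolding \<mu>_def using infsum_mono_neutral[OF _ mu_term_summable, of "\<lambda>u. weight u * measure (word_measure u) ?I" "{[]}"]
    using Nil_in_Red mu_term_nonneg by auto
  ultimately show ?thesis
    by linarith
qed

lemma word_measure_le_reduced_cons:
  assumes g: "g \<in> Gens" and u: "u \<in> Red" and T: "T \<in> sets borel" and S: "S \<in> sets borel" "S \<subseteq> D"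
    and T_S: "p ` T \<subseteq> g ` p ` S"
  shows "measure (word_measure u) T \<le> measure (word_measure (reduced_cons (inv_gen g) u)) S"
proof -
  let ?v = "reduced_cons (inv_gen g) u"
  have v: "?v \<in> Red"
    by (rule reduced_cons_in_Red[OF inv_gen(1)[OF g] u])
  have "word_coord u -` T \<inter> {0..1} \<subseteq> word_coord ?v -` S \<inter> {0..1}"
  proof
    fix s assume s: "s \<in> word_coord u -` T \<inter> {0..1}"
    then obtain \<sigma> where \<sigma>: "\<sigma> \<in> S" "p (word_coord u s) = g (p \<sigma>)"
      using T_S by blast
    have "eval_word ?v (p s) = inv_gen g (p (word_coord u s))"
      using eval_word_reduced_cons[OF inv_gen(1)[OF g]] p_word_coord[OF Red_subset[OF u]] s by simp
    also have "\<dots> = p \<sigma>"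
      using \<sigma>(2) inv_gen_left[OF g] by simp
    finally have "word_coord ?v s = \<sigma>"
      unfolding word_coord_def using \<theta>_p \<sigma>(1) S(2) by auto
    then show "s \<in> word_coord ?v -` S \<inter> {0..1}"
      using \<sigma>(1) s by auto
  qed
  then have "measure lebesgue_01 (word_coord u -` T \<inter> {0..1}) \<le> measure lebesgue_01 (word_coord ?v -` S \<inter> {0..1})"
    using measurable_sets[OF word_coord_measurable[OF Red_subset[OF v]] S(1)] space_lebesgue_01
      prob_space.finite_measure[OF prob_space_lebesgue_01]
    by (intro finite_measure.finite_measure_mono) auto
  then show ?thesis
    using measure_word_measure[OF Red_subset[OF u] T] measure_word_measure[OF Red_subset[OF v] S(1)] by simp
qed

lemma mu_le_gen_image:
  assumes g: "g \<in> Gens" and T: "T \<in> sets borel" and S: "S \<in> sets borel" "S \<subseteq> D"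
    and T_S: "p ` T \<subseteq> g ` p ` S"
  shows "\<mu> T \<le> exp \<epsilon> * \<mu> S"
proof -
  let ?\<sigma> = "reduced_cons (inv_gen g)"
  define f where "f = (\<lambda>u. weight u * measure (word_measure u) S)"
  have f: "f summable_on Red" "\<And>u. 0 \<le> f u"
    unfolding f_def by (rule mu_term_summable, rule mu_term_nonneg)
  have \<sigma>: "inj_on ?\<sigma> Red" "?\<sigma> ` Red \<subseteq> Red"
    using inj_on_reduced_cons reduced_cons_in_Red inv_gen(1)[OF g] by auto
  note f_\<sigma> = infsum_comp_inj_le[OF f \<sigma>]
  have "\<mu> T \<le> (\<Sum>\<^sub>\<infinity> u\<in>Red. exp \<epsilon> * (f \<circ> ?\<sigma>) u)"
    unfolding \<mu>_def
  proof (rule infsum_mono[OF mu_term_summable summable_on_cmult_right[OF f_\<sigma>(1)]])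
    fix u assume u: "u \<in> Red"
    have "weight u * measure (word_measure u) T \<le> (exp \<epsilon> * weight (?\<sigma> u)) * measure (word_measure (?\<sigma> u)) S"
      using word_measure_le_reduced_cons[OF g u T S T_S] weight_le_reduced_cons[of u]
      by (intro mult_mono) (auto simp: less_imp_le weight_pos)
    then show "weight u * measure (word_measure u) T \<le> exp \<epsilon> * (f \<circ> ?\<sigma>) u"
      unfolding f_def by simp
  qed
  also have "\<dots> = exp \<epsilon> * infsum (f \<circ> ?\<sigma>) Red"
    by (rule infsum_cmult_right) (use f_\<sigma>(1) in \<open>simp add: comp_def\<close>)
  also have "\<dots> \<le> exp \<epsilon> * \<mu> S"
    using f_\<sigma>(2) unfolding \<mu>_def f_def by (simp add: mult_left_mono)
  finally show ?thesis .
qed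

end

section \<open>The conjugating homeomorphism\<close>

context parametrized_action
begin

definition mu_cdf :: "real \<Rightarrow> real" where
  "mu_cdf t = \<mu> {..t}"

definition normalized_cdf :: "real \<Rightarrow> real" where
  "normalized_cdf t = mu_cdf t / total_mass"

lemma continuous_mu_cdf: "continuous_on UNIV mu_cdf"
proof -
  have eq: "mu_cdf = (\<lambda>t. \<Sum>\<^sub>\<infinity> u\<in>Red. weight u * cdf (word_measure u) t)"
    unfolding mu_cdf_def \<mu>_def by (simp add: cdf_def2)
  show ?thesis
    unfolding eq
  proof (rule continuous_on_infsum_weighted[OF weight_summable])
    fix u assume "u \<in> Red"
    then have u: "set u \<subseteq> Gens"
      by (rule Red_subset)
    interpret finite_borel_measure "word_measure u"
      using prob_space.finite_measure[OF prob_space_word_measure[OF u]]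
      by (intro finite_borel_measure.intro finite_borel_measure_axioms.intro sets_word_measure)
    show "continuous_on UNIV (cdf (word_measure u))"
      using isCont_cdf word_measure_singleton[OF u] by (intro continuous_at_imp_continuous_on) auto
    show "0 \<le> cdf (word_measure u) t \<and> cdf (word_measure u) t \<le> 1" for t
      unfolding cdf_def2 using measure_word_measure_le_1[OF u] by auto
  qed (use weight_pos in \<open>auto intro: less_imp_le\<close>)
qed

lemma mu_cdf_0: "mu_cdf 0 = 0"
proof -
  have "{..0::real} = {..<0} \<union> {0}"
    by auto
  then have "mu_cdf 0 = \<mu> {..<0} + \<mu> {0}"
    unfolding mu_cdf_def using mu_Un_disjoint[of "{..<0}" "{0}"] by simp
  moreover have "\<mu> {..<0} = 0"
    by (rule mu_outside_D) (use D_bounds in auto)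
  ultimately show ?thesis
    using mu_singleton by simp
qed

lemma mu_cdf_1: "mu_cdf 1 = total_mass"
proof -
  have "\<mu> {1<..} = 0"
    by (rule mu_outside_D) (use D_bounds in auto)
  moreover have "\<mu> ({..1} \<union> {1<..}) = \<mu> {..1} + \<mu> {1<..}"
    by (rule mu_Un_disjoint) auto
  moreover have "{..1::real} \<union> {1<..} = UNIV"
    by auto
  ultimately show ?thesis
    unfolding mu_cdf_def using mu_UNIV by simp
qed

lemma mu_Ioc: "a \<le> b \<Longrightarrow> \<mu> {a<..b} = mu_cdf b - mu_cdf a"
proof -
  assume "a \<le> b"
  then have "{..a} \<union> {a<..b} = {..b}"
    by auto
  moreover have "\<mu> ({..a} \<union> {a<..b}) = \<mu> {..a} + \<mu> {a<..b}"
    by (rule mu_Un_disjoint) auto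
  ultimately show ?thesis
    unfolding mu_cdf_def by simp
qed

lemma mu_Icc: "a \<le> b \<Longrightarrow> \<mu> {a..b} = mu_cdf b - mu_cdf a"
proof -
  assume "a \<le> b"
  then have "{a..b} = {a} \<union> {a<..b}"
    by auto
  then show ?thesis
    using mu_Un_disjoint[of "{a}" "{a<..b}"] mu_Ioc[OF \<open>a \<le> b\<close>] mu_singleton by simp
qed

lemma mu_Ioo: "a \<le> b \<Longrightarrow> \<mu> {a<..<b} = mu_cdf b - mu_cdf a"
proof (cases "a = b")
  case True
  then show ?thesis
    by (simp add: \<mu>_def)
next
  case False
  moreover assume "a \<le> b"
  ultimately have "{a<..b} = {a<..<b} \<union> {b}"
    by auto
  then show ?thesis
    using mu_Un_disjoint[of "{a<..<b}" "{b}"] mu_Ioc[OF \<open>a \<le> b\<close>] mu_singleton by simp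
qed

lemma mu_cdf_increment_ge: "0 \<le> a \<Longrightarrow> a \<le> b \<Longrightarrow> b \<le> 1 \<Longrightarrow> mu_cdf a + (b - a) \<le> mu_cdf b"
  using mu_Ioo[of a b] length_le_mu_Ioo[of a b] by simp

lemma total_mass_ge_1: "total_mass \<ge> 1"
  using mu_cdf_increment_ge[of 0 1] mu_cdf_0 mu_cdf_1 by simp

lemma total_mass_pos: "total_mass > 0"
  using total_mass_ge_1 by simp

lemma normalized_cdf_0: "normalized_cdf 0 = 0"
  unfolding normalized_cdf_def using mu_cdf_0 by simp

lemma normalized_cdf_1: "normalized_cdf 1 = 1"
  unfolding normalized_cdf_def using mu_cdf_1 total_mass_pos by simp

lemma continuous_normalized_cdf: "continuous_on A normalized_cdf"
  unfolding normalized_cdf_def using total_mass_pos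
  by (intro continuous_intros continuous_on_subset[OF continuous_mu_cdf]) auto

lemma normalized_cdf_strict_mono: "0 \<le> a \<Longrightarrow> a < b \<Longrightarrow> b \<le> 1 \<Longrightarrow> normalized_cdf a < normalized_cdf b"
  unfolding normalized_cdf_def using mu_cdf_increment_ge[of a b] total_mass_pos
  by (simp add: divide_strict_right_mono)

lemma normalized_cdf_mono: "0 \<le> a \<Longrightarrow> a \<le> b \<Longrightarrow> b \<le> 1 \<Longrightarrow> normalized_cdf a \<le> normalized_cdf b"
  using normalized_cdf_strict_mono[of a b] by (cases "a = b") auto

lemma abs_normalized_cdf_diff:
  "x \<in> {0..1} \<Longrightarrow> y \<in> {0..1} \<Longrightarrow>
     \<bar>normalized_cdf x - normalized_cdf y\<bar> = normalized_cdf (max x y) - normalized_cdf (min x y)"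
  using normalized_cdf_mono[of x y] normalized_cdf_mono[of y x] by (auto simp: max_def min_def)

lemma total_mass_mult_normalized_cdf_diff:
  "total_mass * (normalized_cdf b - normalized_cdf a) = mu_cdf b - mu_cdf a"
  unfolding normalized_cdf_def using total_mass_pos by (simp add: field_simps)

lemma mu_Icc_normalized: "a \<le> b \<Longrightarrow> \<mu> {a..b} = total_mass * (normalized_cdf b - normalized_cdf a)"
  using mu_Icc total_mass_mult_normalized_cdf_diff by simp

lemma inj_on_normalized_cdf: "inj_on normalized_cdf {0..1}"
  by (rule strict_mono_on_imp_inj_on, rule strict_mono_onI) (auto intro: normalized_cdf_strict_mono)

lemma normalized_cdf_image_Icc: "normalized_cdf ` {0..1} = {0..1}"
proof
  show "normalized_cdf ` {0..1} \<subseteq> {0..1}"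
    using normalized_cdf_mono[of 0] normalized_cdf_mono[of _ 1] normalized_cdf_0 normalized_cdf_1 by fastforce
  show "{0..1} \<subseteq> normalized_cdf ` {0..1}"
  proof
    fix y :: real assume "y \<in> {0..1}"
    then obtain x where "0 \<le> x" "x \<le> 1" "normalized_cdf x = y"
      using IVT'[of normalized_cdf 0 y 1] normalized_cdf_0 normalized_cdf_1 continuous_normalized_cdf by auto
    then show "y \<in> normalized_cdf ` {0..1}"
      by auto
  qed
qed

lemma normalized_cdf_image_D: "normalized_cdf ` D = D"
proof -
  have "{0..<1} = {0..1} - {1::real}"
    by auto
  then have "normalized_cdf ` {0..<1} = normalized_cdf ` {0..1} - {normalized_cdf 1}"
    by (simp add: inj_on_image_set_diff[OF inj_on_normalized_cdf])
  also have "\<dots> = {0..<1}"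
    using normalized_cdf_image_Icc normalized_cdf_1 by auto
  finally show ?thesis
    using D_cases normalized_cdf_image_Icc by metis
qed

definition conj_map :: "complex \<Rightarrow> complex" where
  "conj_map z = p (normalized_cdf (\<theta> z))"

lemma conj_map_p: "t \<in> {0..1} \<Longrightarrow> conj_map (p t) = p (normalized_cdf t)"
proof (cases "t \<in> D")
  case False
  moreover assume "t \<in> {0..1}"
  ultimately have "t = 1" "p 1 = p 0" "0 \<in> D"
    using D_cases by auto
  then show ?thesis
    unfolding conj_map_def using \<theta>_p[of 0] normalized_cdf_0 normalized_cdf_1 by simp
qed (simp add: conj_map_def \<theta>_p)

lemma conj_map_image: "conj_map ` M = M"
proof -
  have "conj_map ` M = conj_map ` p ` D"
    using p_image_D by simp
  also have "\<dots> = p ` normalized_cdf ` D"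
    unfolding image_image using conj_map_p D_bounds(1) by (intro image_cong) auto
  also have "\<dots> = M"
    using normalized_cdf_image_D p_image_D by simp
  finally show ?thesis .
qed

lemma inj_on_conj_map: "inj_on conj_map M"
proof
  fix x y assume "x \<in> M" "y \<in> M" and eq: "conj_map x = conj_map y"
  then obtain s s' where s: "s \<in> D" "x = p s" "s' \<in> D" "y = p s'"
    using p_image_D by auto
  then have "p (normalized_cdf s) = p (normalized_cdf s')"
    using eq conj_map_p D_bounds(1) by (metis subsetD)
  moreover have "normalized_cdf s \<in> D" "normalized_cdf s' \<in> D"
    using normalized_cdf_image_D s by auto
  ultimately have "normalized_cdf s = normalized_cdf s'"
    using \<theta>_p by metis
  then show "x = y"
    using inj_on_normalized_cdf D_bounds(1) s by (auto simp: inj_on_def)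
qed

lemma continuous_on_conj_map: "continuous_on M conj_map"
proof (rule continuous_on_through_compact_surjection[OF compact_Icc continuous_p p_image])
  show "continuous_on {0..1} (conj_map \<circ> p)"
  proof (rule continuous_on_eq)
    show "continuous_on {0..1} (p \<circ> normalized_cdf)"
      using continuous_on_compose[OF continuous_normalized_cdf, of "{0..1}" p] continuous_p
        normalized_cdf_image_Icc by simp
  qed (simp add: conj_map_p)
qed

lemma conj_map_homeomorphism: "\<exists>h'. homeomorphism M M conj_map h'"
  by (rule homeomorphism_compact[OF compact_M continuous_on_conj_map conj_map_image inj_on_conj_map])

lemma conj_map_conjugate:
  assumes h': "homeomorphism M M conj_map h'" and g: "g \<in> Gens" and x: "x \<in> M"
  obtains s where "s \<in> D" "x = p (normalized_cdf s)" "conj_map (g (h' x)) = p (normalized_cdf (\<theta> (g (p s))))"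
proof -
  obtain z where z: "z \<in> M" "x = conj_map z"
    using x conj_map_image by auto
  define s where "s = \<theta> z"
  have s: "s \<in> D" "z = p s"
    unfolding s_def using \<theta>_in_D p_\<theta> z by auto
  have "h' x = p s"
    using h' z s unfolding homeomorphism_def by auto
  moreover have "g (p s) \<in> M"
    using gen_image[OF g] s z by auto
  ultimately have "conj_map (g (h' x)) = p (normalized_cdf (\<theta> (g (p s))))"
    unfolding conj_map_def by simp
  moreover have "x = p (normalized_cdf s)"
    using z s conj_map_p D_bounds by auto
  ultimately show thesis
    using that s by blast
qed

lemma lipschitz_wrt_conj_map:
  assumes h': "homeomorphism M M conj_map h'" and g: "g \<in> Gens"
    and bound: "\<And>s s'. s \<in> D \<Longrightarrow> s' \<in> D \<Longrightarrow>
      d (p (normalized_cdf (\<theta> (g (p s))))) (p (normalized_cdf (\<theta> (g (p s')))))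
        \<le> L * d (p (normalized_cdf s)) (p (normalized_cdf s'))"
  shows "lipschitz_wrt M d L (conj_map \<circ> g \<circ> h')"
  unfolding lipschitz_wrt_def
proof (intro ballI)
  fix x y assume "x \<in> M" "y \<in> M"
  obtain s where "s \<in> D" "x = p (normalized_cdf s)" "conj_map (g (h' x)) = p (normalized_cdf (\<theta> (g (p s))))"
    using conj_map_conjugate[OF h' g \<open>x \<in> M\<close>] .
  moreover obtain s' where "s' \<in> D" "y = p (normalized_cdf s')"
    "conj_map (g (h' y)) = p (normalized_cdf (\<theta> (g (p s'))))"
    using conj_map_conjugate[OF h' g \<open>y \<in> M\<close>] .
  ultimately show "d ((conj_map \<circ> g \<circ> h') x) ((conj_map \<circ> g \<circ> h') y) \<le> L * d x y"
    using bound by simp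
qed

lemma normalized_cdf_segment_bound:
  assumes g: "g \<in> Gens" and ab: "a \<le> b" and lh: "lo \<le> hi" "{lo..hi} \<subseteq> D"
    and img: "p ` {a..b} \<subseteq> g ` p ` {lo..hi}"
  shows "normalized_cdf b - normalized_cdf a \<le> exp \<epsilon> * (normalized_cdf hi - normalized_cdf lo)"
proof -
  have "\<mu> {a..b} \<le> exp \<epsilon> * \<mu> {lo..hi}"
    using lh by (intro mu_le_gen_image[OF g _ _ _ img]) auto
  then show ?thesis
    using mu_Icc_normalized[OF lh(1)] mu_Icc_normalized[OF ab] total_mass_pos
    by (simp add: mult.left_commute)
qed

end

section \<open>The interval\<close>

lemma connected_Reals_Icc_subset:
  assumes C: "C \<subseteq> \<real>" "connected C" and ab: "complex_of_real a \<in> C" "complex_of_real b \<in> C"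
  shows "complex_of_real ` {a..b} \<subseteq> C"
proof
  fix z assume "z \<in> complex_of_real ` {a..b}"
  then obtain t where t: "t \<in> {a..b}" "z = of_real t"
    by auto
  have "connected (Re ` C)"
    by (rule connected_continuous_image[OF continuous_on_Re[OF continuous_on_id] C(2)])
  moreover have "a \<in> Re ` C" "b \<in> Re ` C"
    using ab by (metis Re_complex_of_real image_eqI)+
  ultimately obtain y where y: "y \<in> C" "Re y = t"
    using connected_contains_Icc t(1) by (metis imageE subsetD)
  then have "y = z"
    using C(1) t(2) of_real_Re by (metis subsetD)
  then show "z \<in> C"
    using y(1) by simp
qed

lemma unit_interval_c_subset_Reals: "unit_interval_c \<subseteq> \<real>"
  unfolding unit_interval_c_def by auto

locale interval_action = parametrized_action unit_interval_c Gens \<epsilon> "{0..1}" complex_of_real Re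
  for Gens \<epsilon>
begin

lemma normalized_cdf_gen_bound:
  assumes g: "g \<in> Gens" and s: "s \<in> {0..1}" "s' \<in> {0..1}"
  shows "\<bar>normalized_cdf (Re (g s)) - normalized_cdf (Re (g s'))\<bar>
           \<le> exp \<epsilon> * \<bar>normalized_cdf s - normalized_cdf s'\<bar>"
proof -
  define \<alpha> where "\<alpha> = Re (g s)"
  define \<beta> where "\<beta> = Re (g s')"
  have "g s \<in> unit_interval_c" "g s' \<in> unit_interval_c"
    using gen_image[OF g] s by (auto simp: unit_interval_c_def)
  then have \<alpha>\<beta>: "\<alpha> \<in> {0..1}" "\<beta> \<in> {0..1}" "g s = of_real \<alpha>" "g s' = of_real \<beta>"
    unfolding \<alpha>_def \<beta>_def using \<theta>_in_D p_\<theta> by auto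
  define I where "I = complex_of_real ` {min s s'..max s s'}"
  have "{min s s'..max s s'} \<subseteq> {0..1}"
    using s by simp
  then have I: "I \<subseteq> unit_interval_c"
    unfolding I_def unit_interval_c_def by (rule image_mono)
  have "connected I"
    unfolding I_def by (intro connected_continuous_image continuous_on_of_real continuous_on_id connected_Icc)
  have "g ` I \<subseteq> \<real>"
    using image_mono[OF I, of g] gen_image[OF g] unit_interval_c_subset_Reals by blast
  moreover have "connected (g ` I)"
    by (rule connected_continuous_image[OF continuous_on_subset[OF continuous_on_gen[OF g] I] \<open>connected I\<close>])
  moreover have "complex_of_real \<alpha> \<in> g ` I" "complex_of_real \<beta> \<in> g ` I"
    unfolding I_def \<alpha>\<beta>(3,4)[symmetric] by (intro imageI; simp)+
  then have "complex_of_real (min \<alpha> \<beta>) \<in> g ` I" "complex_of_real (max \<alpha> \<beta>) \<in> g ` I"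
    by (simp_all add: min_def max_def)
  ultimately have "complex_of_real ` {min \<alpha> \<beta>..max \<alpha> \<beta>} \<subseteq> g ` I"
    by (rule connected_Reals_Icc_subset)
  then have "normalized_cdf (max \<alpha> \<beta>) - normalized_cdf (min \<alpha> \<beta>)
      \<le> exp \<epsilon> * (normalized_cdf (max s s') - normalized_cdf (min s s'))"
    unfolding I_def using s by (intro normalized_cdf_segment_bound[OF g]) auto
  then show ?thesis
    using abs_normalized_cdf_diff \<alpha>\<beta>(1,2) s unfolding \<alpha>_def \<beta>_def by simp
qed

end

lemma lipschitz_conjugation_interval:
  assumes "generated_action unit_interval_c Gens \<epsilon>"
  shows "\<exists>h h'. homeomorphism unit_interval_c unit_interval_c h h' \<and>
           (\<forall>g\<in>Gens. lipschitz_wrt unit_interval_c (\<lambda>z w. dist z w) (exp \<epsilon>) (h \<circ> g \<circ> h'))"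
proof -
  interpret interval_action Gens \<epsilon>
  proof (intro_locales)
    show "generated_action unit_interval_c Gens \<epsilon>"
      by (rule assms)
    show "parametrized_action_axioms unit_interval_c {0..1} complex_of_real Re"
    proof
      show "continuous_on {0..1} complex_of_real"
        by (intro continuous_on_of_real continuous_on_id)
      show "Re \<in> borel_measurable borel"
        by (intro borel_measurable_continuous_onI continuous_on_Re continuous_on_id)
    qed (auto simp: unit_interval_c_def)
  qed
  obtain h' where h': "homeomorphism unit_interval_c unit_interval_c conj_map h'"
    using conj_map_homeomorphism by blast
  have "lipschitz_wrt unit_interval_c (\<lambda>z w. dist z w) (exp \<epsilon>) (conj_map \<circ> g \<circ> h')" if "g \<in> Gens" for g
    using normalized_cdf_gen_bound[OF that]
    by (intro lipschitz_wrt_conj_map[OF h' that]) (simp add: dist_of_real dist_real_def)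
  then show ?thesis
    using h' by blast
qed

section \<open>The circle\<close>

definition circle_point :: "real \<Rightarrow> complex" where
  "circle_point t = cis (2 * pi * t)"

definition circle_coord :: "complex \<Rightarrow> real" where
  "circle_coord z = (if Arg z < 0 then Arg z / (2 * pi) + 1 else Arg z / (2 * pi))"

lemma Arg_measurable: "Arg \<in> borel_measurable borel"
proof -
  let ?f = "\<lambda>z. if z \<in> \<real>\<^sub>\<le>\<^sub>0 then (if z = 0 then 0 else pi) else indicator (- \<real>\<^sub>\<le>\<^sub>0) z *\<^sub>R Arg z"
  have off_axis: "(\<lambda>z. indicator (- \<real>\<^sub>\<le>\<^sub>0) z *\<^sub>R Arg z) \<in> borel_measurable borel"
    by (rule borel_measurable_continuous_on_indicator)
       (auto intro!: borel_open continuous_on_Arg simp: open_Compl closed_nonpos_Reals_complex)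
  have on_axis: "(\<lambda>z::complex. if z = 0 then 0 else pi) \<in> borel_measurable borel"
    by measurable
  have "?f \<in> borel_measurable borel"
    by (rule measurable_If_set[OF on_axis off_axis]) (auto intro!: borel_closed closed_nonpos_Reals_complex)
  moreover have "?f = Arg"
  proof
    fix z :: complex
    show "?f z = Arg z"
    proof (cases "z \<in> \<real>\<^sub>\<le>\<^sub>0")
      case True
      then obtain r where "z = of_real r" "r \<le> 0"
        unfolding nonpos_Reals_def by auto
      then show ?thesis
        by auto
    qed auto
  qed
  ultimately show ?thesis
    by simp
qed

lemma circle_coord_measurable: "circle_coord \<in> borel_measurable borel"
  unfolding circle_coord_def using Arg_measurable by measurable

lemma norm_circle_point [simp]: "norm (circle_point t) = 1"
  unfolding circle_point_def by simp

lemma continuous_on_circle_point: "continuous_on S circle_point"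
  unfolding circle_point_def by (intro continuous_intros)

lemma circle_point_nonzero: "circle_point t \<noteq> 0"
  unfolding circle_point_def by simp

lemma circle_point_add_1: "circle_point (t + 1) = circle_point t"
proof -
  have "circle_point (t + 1) = cis (2 * pi * t) * cis (2 * pi)"
    unfolding circle_point_def cis_mult by (simp add: algebra_simps)
  then show ?thesis
    unfolding circle_point_def by simp
qed

lemma circle_point_1: "circle_point 1 = circle_point 0"
  using circle_point_add_1[of 0] by simp

lemma circle_coord_range: "circle_coord z \<in> {0..<1}"
  unfolding circle_coord_def using mpi_less_Arg[of z] Arg_le_pi[of z] pi_gt_zero
  by (auto simp: field_simps)

lemma Arg_circle_point: "- 1/2 < t \<Longrightarrow> t \<le> 1/2 \<Longrightarrow> Arg (circle_point t) = 2 * pi * t"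
proof -
  assume t: "- 1/2 < t" "t \<le> 1/2"
  have "2 * pi * (- 1/2) < 2 * pi * t"
    using t by (intro mult_strict_left_mono) simp_all
  moreover have "2 * pi * t \<le> 2 * pi * (1/2)"
    using t by (intro mult_left_mono) simp_all
  ultimately show ?thesis
    unfolding circle_point_def by (intro Arg_cis) auto
qed

lemma circle_coord_circle_point: "t \<in> {0..<1} \<Longrightarrow> circle_coord (circle_point t) = t"
proof -
  assume t: "t \<in> {0..<1}"
  show ?thesis
  proof (cases "t \<le> 1/2")
    case True
    then have "Arg (circle_point t) = 2 * pi * t"
      using t by (intro Arg_circle_point) auto
    then show ?thesis
      unfolding circle_coord_def using t by (simp add: not_less)
  next
    case False
    have "Arg (circle_point t) = Arg (circle_point (t - 1))"
      using circle_point_add_1[of "t - 1"] by simp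
    also have "\<dots> = 2 * pi * (t - 1)"
      using False t by (intro Arg_circle_point) auto
    finally show ?thesis
      unfolding circle_coord_def using t by (simp add: mult_pos_neg)
  qed
qed

lemma circle_point_circle_coord: "norm z = 1 \<Longrightarrow> circle_point (circle_coord z) = z"
proof -
  assume z: "norm z = 1"
  have "circle_point (circle_coord z) = cis (Arg z)"
    unfolding circle_coord_def using circle_point_add_1[of "Arg z / (2 * pi)"]
    by (simp add: circle_point_def)
  also have "\<dots> = sgn z"
    using z by (intro cis_Arg) auto
  also have "\<dots> = z"
    using z by (simp add: sgn_div_norm)
  finally show ?thesis .
qed

lemma circle_point_image: "circle_point ` {0..<1} = sphere 0 1" "circle_point ` {0..1} = sphere 0 1"
proof -
  have "sphere 0 1 \<subseteq> circle_point ` {0..<1}"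
  proof
    fix z :: complex assume "z \<in> sphere 0 1"
    then have "z = circle_point (circle_coord z)"
      by (simp add: circle_point_circle_coord)
    then show "z \<in> circle_point ` {0..<1}"
      using circle_coord_range by blast
  qed
  moreover have "circle_point ` {0..1} \<subseteq> sphere 0 1"
    by auto
  moreover have "circle_point ` {0..<1} \<subseteq> circle_point ` {0..1}"
    by (rule image_mono) auto
  ultimately show "circle_point ` {0..<1} = sphere 0 1" "circle_point ` {0..1} = sphere 0 1"
    by blast+
qed

lemma circle_dist_circle_point:
  assumes "a \<in> {0..<1}" "b \<in> {0..<1}"
  shows "circle_dist (circle_point a) (circle_point b) = min \<bar>a - b\<bar> (1 - \<bar>a - b\<bar>)"
proof -
  define x where "x = a - b"
  have x: "-1 < x" "x < 1"
    using assms unfolding x_def by auto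
  have Arg_eq: "\<bar>Arg (circle_point y)\<bar> / (2 * pi) = \<bar>y\<bar>" if "- 1/2 < y" "y \<le> 1/2" for y
  proof -
    have "Arg (circle_point y) = 2 * pi * y"
      using that by (rule Arg_circle_point)
    then show ?thesis
      by (simp add: abs_mult)
  qed
  have "circle_point a / circle_point b = circle_point x"
    unfolding circle_point_def x_def cis_divide by (simp add: algebra_simps)
  then have "circle_dist (circle_point a) (circle_point b) = \<bar>Arg (circle_point x)\<bar> / (2 * pi)"
    unfolding circle_dist_def by simp
  also have "\<dots> = min \<bar>x\<bar> (1 - \<bar>x\<bar>)"
  proof -
    consider "x \<le> - 1/2" | "- 1/2 < x \<and> x \<le> 1/2" | "1/2 < x"
      by linarith
    then show ?thesis
    proof cases
      case 1
      then show ?thesis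
        using Arg_eq[of "x + 1"] circle_point_add_1[of x] x by auto
    next
      case 2
      then show ?thesis
        using Arg_eq[of x] by auto
    next
      case 3
      then show ?thesis
        using Arg_eq[of "x - 1"] circle_point_add_1[of "x - 1"] x by auto
    qed
  qed
  finally show ?thesis
    unfolding x_def .
qed

text \<open>A continuous inverse of \<open>circle_point\<close> on the circle punctured at \<open>circle_point r\<close>,
  with values in \<open>(r, r + 1)\<close>.\<close>

definition circle_lift :: "real \<Rightarrow> complex \<Rightarrow> real" where
  "circle_lift r z = r + 1/2 + Arg (- (z / circle_point r)) / (2 * pi)"

lemma norm_div_circle_point: "z \<in> sphere 0 1 \<Longrightarrow> norm (- (z / circle_point r)) = 1"
  by (simp add: norm_divide)

lemma continuous_on_circle_lift: "continuous_on (sphere 0 1 - {circle_point r}) (circle_lift r)"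
proof -
  have "- (z / circle_point r) \<notin> \<real>\<^sub>\<le>\<^sub>0" if z: "z \<in> sphere 0 1 - {circle_point r}" for z
  proof
    assume "- (z / circle_point r) \<in> \<real>\<^sub>\<le>\<^sub>0"
    then obtain x where x: "- (z / circle_point r) = of_real x" "x \<le> 0"
      unfolding nonpos_Reals_def by auto
    then have "x = -1"
      using norm_div_circle_point[of z r] z by simp
    then have "z = circle_point r"
      using x circle_point_nonzero[of r] by (simp add: divide_eq_eq)
    then show False
      using z by simp
  qed
  then show ?thesis
    unfolding circle_lift_def using circle_point_nonzero by (intro continuous_intros) auto
qed

lemma circle_point_circle_lift: "z \<in> sphere 0 1 \<Longrightarrow> circle_point (circle_lift r z) = z"
proof -
  assume z: "z \<in> sphere 0 1"
  define w where "w = - (z / circle_point r)"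
  have "norm w = 1"
    unfolding w_def by (rule norm_div_circle_point[OF z])
  then have "cis (Arg w) = sgn w"
    by (intro cis_Arg) auto
  then have "cis (Arg w) = w"
    using \<open>norm w = 1\<close> by (simp add: sgn_div_norm)
  moreover have "circle_point (circle_lift r z) = cis (2 * pi * r) * cis pi * cis (Arg w)"
    unfolding circle_point_def circle_lift_def w_def by (simp add: algebra_simps flip: cis_mult)
  ultimately show ?thesis
    unfolding w_def circle_point_def using circle_point_nonzero[of r]
    by (simp add: circle_point_def)
qed

lemma circle_lift_circle_point: "r < x \<Longrightarrow> x < r + 1 \<Longrightarrow> circle_lift r (circle_point x) = x"
proof -
  assume x: "r < x" "x < r + 1"
  have "- (circle_point x / circle_point r) = cis (2 * pi * (x - r)) / cis pi"
    unfolding circle_point_def cis_divide cis_pi by (simp add: algebra_simps)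
  also have "\<dots> = cis (2 * pi * (x - r) - pi)"
    by (rule cis_divide)
  finally have "- (circle_point x / circle_point r) = cis (2 * pi * (x - r) - pi)" .
  moreover have "2 * pi * 0 < 2 * pi * (x - r)"
    using x by (intro mult_strict_left_mono) simp_all
  moreover have "2 * pi * (x - r) < 2 * pi * 1"
    using x by (intro mult_strict_left_mono) simp_all
  ultimately have "Arg (- (circle_point x / circle_point r)) = 2 * pi * (x - r) - pi"
    using Arg_cis[of "2 * pi * (x - r) - pi"] by simp
  then show ?thesis
    unfolding circle_lift_def by (simp add: field_simps)
qed

lemma connected_circle_arc_cases:
  assumes C: "C \<subseteq> sphere 0 1" "connected C" "circle_point \<alpha> \<in> C" "circle_point \<beta> \<in> C"
    and \<alpha>\<beta>: "0 \<le> \<alpha>" "\<alpha> \<le> \<beta>" "\<beta> < 1"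
  shows "circle_point ` {\<alpha>..\<beta>} \<subseteq> C \<or> circle_point ` ({\<beta>..<1} \<union> {0..\<alpha>}) \<subseteq> C"
proof (rule ccontr)
  assume "\<not> ?thesis"
  then obtain r r' where r: "r \<in> {\<alpha>..\<beta>}" "circle_point r \<notin> C"
    and r': "r' \<in> {\<beta>..<1} \<union> {0..\<alpha>}" "circle_point r' \<notin> C"
    by blast
  have "\<alpha> < r" "r < \<beta>"
    using r C(3,4) by (auto simp: order.order_iff_strict)
  have C_sub: "C \<subseteq> sphere 0 1 - {circle_point r}"
    using C(1) r(2) by auto
  define t where "t = (if \<beta> < r' then r' else r' + 1)"
  have "r' \<noteq> \<beta>"
    using r'(2) C(4) by auto
  then have "t \<in> {\<beta>..\<alpha> + 1}"
    unfolding t_def using r'(1) \<alpha>\<beta> by auto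
  moreover have "{\<beta>..\<alpha> + 1} \<subseteq> circle_lift r ` C"
  proof (rule connected_contains_Icc)
    show "connected (circle_lift r ` C)"
      by (rule connected_continuous_image[OF continuous_on_subset[OF continuous_on_circle_lift C_sub] C(2)])
    have "circle_lift r (circle_point \<beta>) = \<beta>"
      using \<open>r < \<beta>\<close> \<open>\<alpha> < r\<close> \<alpha>\<beta> by (intro circle_lift_circle_point) auto
    then show "\<beta> \<in> circle_lift r ` C"
      by (rule image_eqI[OF sym C(4)])
    have "circle_lift r (circle_point (\<alpha> + 1)) = \<alpha> + 1"
      using \<open>r < \<beta>\<close> \<open>\<alpha> < r\<close> \<alpha>\<beta> by (intro circle_lift_circle_point) auto
    then show "\<alpha> + 1 \<in> circle_lift r ` C"
      using circle_point_add_1[of \<alpha>] by (intro image_eqI[OF sym C(3)]) simp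
  qed
  ultimately obtain z where "z \<in> C" "circle_lift r z = t"
    by auto
  then have "z = circle_point t"
    using circle_point_circle_lift[of z r] C(1) by auto
  also have "\<dots> = circle_point r'"
    unfolding t_def using circle_point_add_1[of r'] by simp
  finally have "z = circle_point r'" .
  then show False
    using \<open>z \<in> C\<close> r'(2) by simp
qed

lemma connected_circle_point_wrap:
  assumes "0 \<le> a" "a \<le> b" "b \<le> 1"
  shows "connected (circle_point ` ({b..<1} \<union> {0..a}))"
proof -
  have "circle_point ` {b..1} \<subseteq> circle_point ` ({b..<1} \<union> {0..a})"
  proof
    fix z assume "z \<in> circle_point ` {b..1}"
    then obtain x where x: "x \<in> {b..1}" "z = circle_point x"
      by auto
    then show "z \<in> circle_point ` ({b..<1} \<union> {0..a})"
      using assms circle_point_1 by (cases "x = 1") auto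
  qed
  then have "circle_point ` ({b..<1} \<union> {0..a}) = circle_point ` {b..1} \<union> circle_point ` {0..a}"
    by auto
  moreover have "circle_point 0 \<in> circle_point ` {b..1} \<inter> circle_point ` {0..a}"
    using assms circle_point_1 by (auto intro!: image_eqI[of _ _ 1])
  ultimately show ?thesis
    using connected_Un connected_continuous_image[OF continuous_on_circle_point connected_Icc] by (metis empty_iff)
qed

locale circle_action = parametrized_action "sphere 0 1" Gens \<epsilon> "{0..<1}" circle_point circle_coord
  for Gens \<epsilon>
begin

lemma mu_wrap_arc:
  assumes ab: "0 \<le> a" "a \<le> b" "b < 1"
  shows "\<mu> ({b..<1} \<union> {0..a}) = total_mass * (1 - (normalized_cdf b - normalized_cdf a))"
proof -
  have "\<mu> (({b..<1} \<union> {0..a}) \<union> {a<..<b}) = \<mu> ({b..<1} \<union> {0..a}) + \<mu> {a<..<b}"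
    by (rule mu_Un_disjoint) auto
  moreover have "({b..<1} \<union> {0..a}) \<union> {a<..<b} = {0..<1}"
    using ab by auto
  moreover have "\<mu> {0..<1} = total_mass"
    using mu_Un_disjoint[of "{0..<1}" "- {0..<1}"] mu_UNIV mu_outside_D[of "- {0..<1}"] by simp
  moreover have "\<mu> {a<..<b} = total_mass * (normalized_cdf b - normalized_cdf a)"
    using mu_Ioo[OF ab(2)] total_mass_mult_normalized_cdf_diff by simp
  ultimately show ?thesis
    by (simp add: algebra_simps)
qed

lemma normalized_cdf_arc_bound:
  assumes g: "g \<in> Gens" and lh: "0 \<le> lo" "lo \<le> hi" "hi < 1" and ab: "0 \<le> a" "a \<le> b" "b < 1"
    and cover: "\<And>S. S = {lo..hi} \<or> S = {hi..<1} \<union> {0..lo} \<Longrightarrow>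
      circle_point ` {a..b} \<subseteq> g ` circle_point ` S \<or>
      circle_point ` ({b..<1} \<union> {0..a}) \<subseteq> g ` circle_point ` S"
  shows "min (normalized_cdf b - normalized_cdf a) (1 - (normalized_cdf b - normalized_cdf a))
    \<le> exp \<epsilon> * min (normalized_cdf hi - normalized_cdf lo) (1 - (normalized_cdf hi - normalized_cdf lo))"
proof -
  let ?m = "min (\<mu> {a..b}) (\<mu> ({b..<1} \<union> {0..a}))"
  have arc: "?m \<le> exp \<epsilon> * \<mu> S" if S: "S = {lo..hi} \<or> S = {hi..<1} \<union> {0..lo}" for S
  proof -
    have "S \<subseteq> {0..<1}" "S \<in> sets borel"
      using S lh by auto
    from cover[OF S] show ?thesis
    proof
      assume "circle_point ` {a..b} \<subseteq> g ` circle_point ` S"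
      then have "\<mu> {a..b} \<le> exp \<epsilon> * \<mu> S"
        using \<open>S \<subseteq> {0..<1}\<close> \<open>S \<in> sets borel\<close> by (intro mu_le_gen_image[OF g]) auto
      then show ?thesis
        by (simp add: min.coboundedI1)
    next
      assume "circle_point ` ({b..<1} \<union> {0..a}) \<subseteq> g ` circle_point ` S"
      then have "\<mu> ({b..<1} \<union> {0..a}) \<le> exp \<epsilon> * \<mu> S"
        using \<open>S \<subseteq> {0..<1}\<close> \<open>S \<in> sets borel\<close> by (intro mu_le_gen_image[OF g]) auto
      then show ?thesis
        by (simp add: min.coboundedI2)
    qed
  qed
  have "?m \<le> exp \<epsilon> * min (\<mu> {lo..hi}) (\<mu> ({hi..<1} \<union> {0..lo}))"
    using arc[of "{lo..hi}"] arc[of "{hi..<1} \<union> {0..lo}"] by (auto simp: min_def)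
  moreover have "?m = total_mass * min (normalized_cdf b - normalized_cdf a) (1 - (normalized_cdf b - normalized_cdf a))"
    using mu_Icc_normalized[OF ab(2)] mu_wrap_arc[OF ab] total_mass_pos by (simp add: min_mult_distrib_left)
  moreover have "min (\<mu> {lo..hi}) (\<mu> ({hi..<1} \<union> {0..lo}))
      = total_mass * min (normalized_cdf hi - normalized_cdf lo) (1 - (normalized_cdf hi - normalized_cdf lo))"
    using mu_Icc_normalized[OF lh(2)] mu_wrap_arc[OF lh] total_mass_pos by (simp add: min_mult_distrib_left)
  ultimately show ?thesis
    using total_mass_pos by (simp add: mult.left_commute)
qed

lemma gen_image_arc_cover:
  assumes g: "g \<in> Gens" and lh: "0 \<le> lo" "lo \<le> hi" "hi < 1" and ab: "0 \<le> a" "a \<le> b" "b < 1"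
    and S: "S = {lo..hi} \<or> S = {hi..<1} \<union> {0..lo}"
    and ends: "circle_point a \<in> g ` circle_point ` S" "circle_point b \<in> g ` circle_point ` S"
  shows "circle_point ` {a..b} \<subseteq> g ` circle_point ` S \<or>
    circle_point ` ({b..<1} \<union> {0..a}) \<subseteq> g ` circle_point ` S"
proof (rule connected_circle_arc_cases[OF _ _ ends ab])
  have "connected (circle_point ` S)"
    using S connected_circle_point_wrap[of lo hi] lh
      connected_continuous_image[OF continuous_on_circle_point connected_Icc]
    by auto
  moreover have "circle_point ` S \<subseteq> sphere 0 1"
    by auto
  ultimately show "connected (g ` circle_point ` S)"
    using continuous_on_subset[OF continuous_on_gen[OF g]] by (blast intro: connected_continuous_image)
  show "g ` circle_point ` S \<subseteq> sphere 0 1"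
    using gen_image[OF g] by auto
qed

lemma normalized_cdf_gen_circle_bound:
  assumes g: "g \<in> Gens" and s: "s \<in> {0..<1}" "s' \<in> {0..<1}"
  shows "circle_dist (circle_point (normalized_cdf (circle_coord (g (circle_point s)))))
      (circle_point (normalized_cdf (circle_coord (g (circle_point s')))))
    \<le> exp \<epsilon> * circle_dist (circle_point (normalized_cdf s)) (circle_point (normalized_cdf s'))"
proof -
  define \<alpha> where "\<alpha> = circle_coord (g (circle_point s))"
  define \<beta> where "\<beta> = circle_coord (g (circle_point s'))"
  have "circle_point s \<in> sphere 0 1" "circle_point s' \<in> sphere 0 1"
    by simp_all
  then have "g (circle_point s) \<in> sphere 0 1" "g (circle_point s') \<in> sphere 0 1"
    using gen_image[OF g] by blast+
  then have \<alpha>\<beta>: "\<alpha> \<in> {0..<1}" "\<beta> \<in> {0..<1}" "g (circle_point s) = circle_point \<alpha>" "g (circle_point s') = circle_point \<beta>"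
    unfolding \<alpha>_def \<beta>_def using \<theta>_in_D p_\<theta> by auto
  define lo hi where "lo = min s s'" and "hi = max s s'"
  have lh: "0 \<le> lo" "lo \<le> hi" "hi < 1"
    unfolding lo_def hi_def using s by auto
  define a b where "a = min \<alpha> \<beta>" and "b = max \<alpha> \<beta>"
  have ab: "0 \<le> a" "a \<le> b" "b < 1"
    unfolding a_def b_def using \<alpha>\<beta> by auto
  have bound: "min (normalized_cdf b - normalized_cdf a) (1 - (normalized_cdf b - normalized_cdf a))
    \<le> exp \<epsilon> * min (normalized_cdf hi - normalized_cdf lo) (1 - (normalized_cdf hi - normalized_cdf lo))"
  proof (rule normalized_cdf_arc_bound[OF g lh ab], rule gen_image_arc_cover[OF g lh ab])
    fix S assume S: "S = {lo..hi} \<or> S = {hi..<1} \<union> {0..lo}"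
    have "s \<in> S \<and> s' \<in> S"
    proof (cases "s \<le> s'")
      case True
      then show ?thesis
        using S s unfolding lo_def hi_def by (auto simp: min_def max_def)
    next
      case False
      then show ?thesis
        using S s unfolding lo_def hi_def by (auto simp: min_def max_def)
    qed
    then have "circle_point \<alpha> \<in> g ` circle_point ` S" "circle_point \<beta> \<in> g ` circle_point ` S"
      unfolding \<alpha>\<beta>(3,4)[symmetric] by blast+
    then show "circle_point a \<in> g ` circle_point ` S" "circle_point b \<in> g ` circle_point ` S"
      unfolding a_def b_def by (simp_all add: min_def max_def)
  qed
  have H_D: "normalized_cdf x \<in> {0..<1}" if "x \<in> {0..<1}" for x
    using normalized_cdf_image_D that by auto
  have "circle_dist (circle_point (normalized_cdf \<alpha>)) (circle_point (normalized_cdf \<beta>))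
      = min \<bar>normalized_cdf \<alpha> - normalized_cdf \<beta>\<bar> (1 - \<bar>normalized_cdf \<alpha> - normalized_cdf \<beta>\<bar>)"
    using H_D \<alpha>\<beta>(1,2) by (intro circle_dist_circle_point)
  also have "\<bar>normalized_cdf \<alpha> - normalized_cdf \<beta>\<bar> = normalized_cdf b - normalized_cdf a"
    unfolding a_def b_def using \<alpha>\<beta>(1,2) by (intro abs_normalized_cdf_diff) auto
  also note bound
  also have "normalized_cdf hi - normalized_cdf lo = \<bar>normalized_cdf s - normalized_cdf s'\<bar>"
    unfolding lo_def hi_def using s by (intro abs_normalized_cdf_diff[symmetric]) auto
  also have "min \<bar>normalized_cdf s - normalized_cdf s'\<bar> (1 - \<bar>normalized_cdf s - normalized_cdf s'\<bar>)
      = circle_dist (circle_point (normalized_cdf s)) (circle_point (normalized_cdf s'))"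
    using H_D s by (intro circle_dist_circle_point[symmetric])
  finally show ?thesis
    unfolding \<alpha>_def \<beta>_def .
qed
end

lemma lipschitz_conjugation_circle:
  assumes "generated_action (sphere 0 1) Gens \<epsilon>"
  shows "\<exists>h h'. homeomorphism (sphere 0 1) (sphere 0 1) h h' \<and>
           (\<forall>g\<in>Gens. lipschitz_wrt (sphere 0 1) circle_dist (exp \<epsilon>) (h \<circ> g \<circ> h'))"
proof -
  interpret circle_action Gens \<epsilon>
  proof (intro_locales)
    show "generated_action (sphere 0 1) Gens \<epsilon>"
      by (rule assms)
    show "parametrized_action_axioms (sphere 0 1) {0..<1} circle_point circle_coord"
    proof
      show "continuous_on {0..1} circle_point"
        unfolding circle_point_def by (intro continuous_intros)
    qed (use circle_point_1 circle_point_image circle_coord_circle_point circle_coord_range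
          circle_point_circle_coord circle_coord_measurable in auto)
  qed
  obtain h' where h': "homeomorphism (sphere 0 1) (sphere 0 1) conj_map h'"
    using conj_map_homeomorphism by blast
  have "lipschitz_wrt (sphere 0 1) circle_dist (exp \<epsilon>) (conj_map \<circ> g \<circ> h')" if "g \<in> Gens" for g
    using normalized_cdf_gen_circle_bound[OF that] by (intro lipschitz_wrt_conj_map[OF h' that])
  then show ?thesis
    using h' by blast
qed

theorem mainTheorem1:
  fixes M :: "complex set" and d :: "complex \<Rightarrow> complex \<Rightarrow> real"
    and Gens :: "(complex \<Rightarrow> complex) set" and \<epsilon> :: real
  assumes "one_manifold_model M d"
    and "finite Gens" and "card Gens \<ge> 2"
    and "\<forall>g\<in>Gens. homeo_of M g"
    and "\<forall>g\<in>Gens. \<exists>g'\<in>Gens. homeomorphism M M g g'"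
    and "\<epsilon> > ln (real (card Gens) - 1)"
  shows "\<exists>h h'. homeomorphism M M h h' \<and>
           (\<forall>g\<in>Gens. lipschitz_wrt M d (exp \<epsilon>) (h \<circ> g \<circ> h'))"
proof -
  have "generated_action M Gens \<epsilon>"
    using assms(2-6) by unfold_locales auto
  then show ?thesis
    using assms(1) lipschitz_conjugation_circle lipschitz_conjugation_interval
    unfolding one_manifold_model_def by auto
qed

end
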